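(* Let $f:\mathbb{R}^n\to\mathbb{R}$ be twice differentiable, let $x_0\in\mathbb{R}^n$ and $S_f=\{x : f(x)\le f(x_0)\}$. Assume there exist constants $M \ge m>0$ such that $M\|z\|^2 \ge z^{T}\nabla^2 f(x) z \ge m\|z\|^2$ for all $x\in S_f$ and all $z\in\mathbb{R}^n$. Let $x_k\in S_f$, $g_k=\nabla f(x_k)$, $\Delta t_k>0$, and let the preconditioner $H_k$ be given by the switching rule: either $$H_k = I - \frac{y s^{T} + s y^{T}}{y^{T}s} + 2\frac{y^{T}y}{(y^{T}s)^2} s s^{T}$$ for some vectors $s,y\in\mathbb{R}^n$ with $|s^{T}y|>\theta\|s\|^2$ (with $\theta>0$), or $H_k=(\nabla^2 f(x_k))^{-1}$. Let $s_k = -\frac{\Delta t_k}{1+\Delta t_k} H_k g_k$ and define $m_k(s) = \frac{1+0.5\Delta t_k}{1+\Delta t_k}\, g_k^{T}s$. Then there is a positive constant $c_m$ (independent of $k$) such that $$m_k(0)-m_k(s_k) \ge \frac{c_m \Delta t_k}{2(1+\Delta t_k)}\|g_k\|^2 .$$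
   Context: $\|\cdot\|$ is the Euclidean norm, $I$ the identity matrix. $m_k$ is the simplified local model of $f(x_k+s)-f(x_k)$ used in the explicit continuation method $x_{k+1}=x_k+s_k$, $s_k=\frac{\Delta t_k}{1+\Delta t_k}s_k^N$, $s_k^N=-H_kg_k$. *)

theory Defs
  imports "HOL-Analysis.Analysis"
begin

definition outer :: "real^'n \<Rightarrow> real^'n \<Rightarrow> real^'n^'n" where
  "outer u v = (\<chi> i j. u $ i * v $ j)"

definition precond_update :: "real^'n \<Rightarrow> real^'n \<Rightarrow> real^'n^'n" where
  "precond_update s y =
     mat 1 - (1 / (y \<bullet> s)) *\<^sub>R (outer y s + outer s y)
           + (2 * (y \<bullet> y) / (y \<bullet> s)^2) *\<^sub>R outer s s"

definition local_model :: "real \<Rightarrow> real^'n \<Rightarrow> real^'n \<Rightarrow> real" where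
  "local_model dt g s = (1 + dt / 2) / (1 + dt) * (g \<bullet> s)"

end

(*
  The model decrease equals dt (2 + dt) / (2 (1 + dt)^2) * g^T H g, so it suffices to bound
  g^T H g below by a fixed multiple of |g|^2.  For the update formula,
  2 g^T H g = |g|^2 + |g - 2 (s^T g / y^T s) y|^2, which gives the constant 1/2.  For the inverse
  Hessian, the Hessian is symmetric (Schwarz's theorem), and Cauchy-Schwarz for the inner product
  it defines together with z^T Hess z <= M |z|^2 gives g^T Hess^-1 g >= |g|^2 / M.
  Hence c_m = min (1/2) (1/M) works.
*)
theory Submission
  imports Defs
begin

definition second_difference :: "('a::real_vector \<Rightarrow> real) \<Rightarrow> 'a \<Rightarrow> 'a \<Rightarrow> 'a \<Rightarrow> real" where
  "second_difference f x u v = f (x + u + v) - f (x + u) - f (x + v) + f x"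

lemma second_difference_commute: "second_difference f x u v = second_difference f x v u"
  by (simp add: second_difference_def add_ac)

lemma has_real_derivative_along_line:
  fixes f :: "'a::real_inner \<Rightarrow> real"
  assumes "(f has_derivative (\<lambda>h. grad (x + t *\<^sub>R u) \<bullet> h)) (at (x + t *\<^sub>R u))"
  shows "((\<lambda>t. f (x + t *\<^sub>R u)) has_real_derivative grad (x + t *\<^sub>R u) \<bullet> u) (at t)"
proof -
  have "((\<lambda>t. x + t *\<^sub>R u) has_derivative (\<lambda>k. k *\<^sub>R u)) (at t)"
    by (auto intro!: derivative_eq_intros)
  from has_derivative_compose[OF this assms] show ?thesis
    by (simp add: has_field_derivative_def mult_commute_abs)
qed

lemma second_difference_mean_value:
  fixes f :: "'a::real_inner \<Rightarrow> real"
  assumes f_grad: "\<And>x. (f has_derivative (\<lambda>h. grad x \<bullet> h)) (at x)" and "0 < h"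
  obtains \<xi> where "0 < \<xi>" "\<xi> < h" and "second_difference f x (h *\<^sub>R u) (h *\<^sub>R v)
      = h * ((grad (x + h *\<^sub>R v + \<xi> *\<^sub>R u) - grad (x + \<xi> *\<^sub>R u)) \<bullet> u)"
proof -
  define \<phi> where "\<phi> t = f (x + h *\<^sub>R v + t *\<^sub>R u) - f (x + t *\<^sub>R u)" for t
  have der: "DERIV \<phi> t :> (grad (x + h *\<^sub>R v + t *\<^sub>R u) - grad (x + t *\<^sub>R u)) \<bullet> u" for t
    unfolding \<phi>_def inner_diff_left
    by (intro DERIV_diff has_real_derivative_along_line f_grad)
  obtain \<xi> where "0 < \<xi>" "\<xi> < h"
      "\<phi> h - \<phi> 0 = (h - 0) * ((grad (x + h *\<^sub>R v + \<xi> *\<^sub>R u) - grad (x + \<xi> *\<^sub>R u)) \<bullet> u)"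
    using MVT2[OF \<open>0 < h\<close> der] by blast
  moreover have "\<phi> h - \<phi> 0 = second_difference f x (h *\<^sub>R u) (h *\<^sub>R v)"
    by (simp add: \<phi>_def second_difference_def algebra_simps)
  ultimately show thesis using that by simp
qed

lemma second_difference_estimate:
  fixes f :: "'a::real_inner \<Rightarrow> real"
  assumes f_grad: "\<And>x. (f has_derivative (\<lambda>h. grad x \<bullet> h)) (at x)"
    and grad_D: "(grad has_derivative D) (at x)" and "0 < e"
  shows "\<forall>\<^sub>F h in at_right 0. \<bar>second_difference f x (h *\<^sub>R u) (h *\<^sub>R v) - h\<^sup>2 * (D v \<bullet> u)\<bar>
           \<le> e * h\<^sup>2 * (norm u + norm v)\<^sup>2"
proof -
  define K where "K = norm u + norm v"
  define r where "r y = grad y - grad x - D (y - x)" for y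
  have "0 \<le> K" by (simp add: K_def)
  have "linear D" using grad_D by (rule has_derivative_linear)
  obtain d where "0 < d" and r_small: "\<And>y. norm (y - x) < d \<Longrightarrow> norm (r y) \<le> e / 2 * norm (y - x)"
    using grad_D \<open>0 < e\<close> unfolding has_derivative_at_alt r_def by (meson half_gt_zero)
  have "\<bar>second_difference f x (h *\<^sub>R u) (h *\<^sub>R v) - h\<^sup>2 * (D v \<bullet> u)\<bar> \<le> e * h\<^sup>2 * K\<^sup>2"
    if "0 < h" "h < d / (K + 1)" for h
  proof -
    obtain \<xi> where "0 < \<xi>" "\<xi> < h" and mean_value: "second_difference f x (h *\<^sub>R u) (h *\<^sub>R v)
        = h * ((grad (x + h *\<^sub>R v + \<xi> *\<^sub>R u) - grad (x + \<xi> *\<^sub>R u)) \<bullet> u)"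
      using second_difference_mean_value[OF f_grad \<open>0 < h\<close>] by blast
    define y\<^sub>1 where "y\<^sub>1 = x + h *\<^sub>R v + \<xi> *\<^sub>R u"
    define y\<^sub>2 where "y\<^sub>2 = x + \<xi> *\<^sub>R u"
    have "h * (K + 1) < d"
      using that \<open>0 \<le> K\<close> by (simp add: pos_less_divide_eq)
    then have "h * K < d"
      using \<open>0 < h\<close> by (simp add: algebra_simps)
    have r_bound: "norm (r y) \<le> e / 2 * (h * K)" if "norm (y - x) \<le> h * K" for y
      using r_small[of y] that \<open>h * K < d\<close> \<open>0 < e\<close>
      by (meson order_trans le_less_trans mult_left_mono half_gt_zero less_imp_le)
    have "\<xi> * norm u \<le> h * norm u"
      using \<open>\<xi> < h\<close> by (simp add: mult_right_mono)
    have "norm (y\<^sub>1 - x) \<le> norm (h *\<^sub>R v) + norm (\<xi> *\<^sub>R u)"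
      using norm_triangle_ineq[of "h *\<^sub>R v" "\<xi> *\<^sub>R u"] by (simp add: y\<^sub>1_def add.assoc)
    also have "\<dots> \<le> h * K"
      using \<open>0 < h\<close> \<open>0 < \<xi>\<close> \<open>\<xi> * norm u \<le> h * norm u\<close> by (simp add: K_def algebra_simps)
    finally have "norm (r y\<^sub>1) \<le> e / 2 * (h * K)"
      by (rule r_bound)
    moreover have "norm (r y\<^sub>2) \<le> e / 2 * (h * K)"
      using \<open>0 < \<xi>\<close> \<open>\<xi> * norm u \<le> h * norm u\<close> \<open>0 < h\<close>
      by (intro r_bound) (simp add: y\<^sub>2_def K_def distrib_left add_increasing2)
    ultimately have "norm (r y\<^sub>1 - r y\<^sub>2) \<le> e * h * K"
      using norm_triangle_ineq4[of "r y\<^sub>1" "r y\<^sub>2"] by simp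
    have "D (y\<^sub>1 - x) - D (y\<^sub>2 - x) = h *\<^sub>R D v"
      using linear_diff[OF \<open>linear D\<close>, of "y\<^sub>1 - x" "y\<^sub>2 - x"] linear_cmul[OF \<open>linear D\<close>, of h v]
      by (simp add: y\<^sub>1_def y\<^sub>2_def)
    have "grad y\<^sub>1 - grad y\<^sub>2 = (r y\<^sub>1 - r y\<^sub>2) + h *\<^sub>R D v"
      by (simp add: r_def algebra_simps flip: \<open>D (y\<^sub>1 - x) - D (y\<^sub>2 - x) = h *\<^sub>R D v\<close>)
    then have "(grad y\<^sub>1 - grad y\<^sub>2) \<bullet> u = (r y\<^sub>1 - r y\<^sub>2) \<bullet> u + h * (D v \<bullet> u)"
      by (simp add: inner_add_left)
    then have "second_difference f x (h *\<^sub>R u) (h *\<^sub>R v) - h\<^sup>2 * (D v \<bullet> u) = h * ((r y\<^sub>1 - r y\<^sub>2) \<bullet> u)"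
      by (simp add: mean_value flip: y\<^sub>1_def y\<^sub>2_def) (simp add: power2_eq_square algebra_simps)
    also have "\<bar>\<dots>\<bar> \<le> h * (norm (r y\<^sub>1 - r y\<^sub>2) * norm u)"
      using \<open>0 < h\<close> by (simp add: abs_mult Cauchy_Schwarz_ineq2)
    also have "\<dots> \<le> h * ((e * h * K) * K)"
      using \<open>norm (r y\<^sub>1 - r y\<^sub>2) \<le> e * h * K\<close> \<open>0 < h\<close> \<open>0 < e\<close>
      by (intro mult_left_mono mult_mono) (auto simp: K_def)
    finally show ?thesis by (simp add: power2_eq_square algebra_simps)
  qed
  moreover have "0 < d / (K + 1)"
    using \<open>0 < d\<close> \<open>0 \<le> K\<close> by simp
  ultimately show ?thesis
    unfolding eventually_at_right_field K_def by blast
qed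

lemma gradient_derivative_symmetric:
  fixes f :: "'a::real_inner \<Rightarrow> real"
  assumes f_grad: "\<And>x. (f has_derivative (\<lambda>h. grad x \<bullet> h)) (at x)"
    and grad_D: "(grad has_derivative D) (at x)"
  shows "D v \<bullet> u = D u \<bullet> v"
proof (rule ccontr)
  define a where "a = D v \<bullet> u"
  define b where "b = D u \<bullet> v"
  define K where "K = (norm u + norm v)\<^sup>2"
  define e where "e = \<bar>a - b\<bar> / (4 * (K + 1))"
  define S where "S h = second_difference f x (h *\<^sub>R u) (h *\<^sub>R v)" for h
  assume "D v \<bullet> u \<noteq> D u \<bullet> v"
  then have "0 < \<bar>a - b\<bar>" by (simp add: a_def b_def)
  moreover have "0 \<le> K" by (simp add: K_def)
  ultimately have "0 < e" by (simp add: e_def)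
  have "\<forall>\<^sub>F h in at_right 0. 0 < h \<and> \<bar>S h - h\<^sup>2 * a\<bar> \<le> e * h\<^sup>2 * K \<and> \<bar>S h - h\<^sup>2 * b\<bar> \<le> e * h\<^sup>2 * K"
    using eventually_at_right_less
      second_difference_estimate[OF f_grad grad_D \<open>0 < e\<close>, of u v]
      second_difference_estimate[OF f_grad grad_D \<open>0 < e\<close>, of v u]
    unfolding S_def a_def b_def K_def
    by eventually_elim (simp add: second_difference_commute add.commute)
  then obtain h where "0 < h" and "\<bar>S h - h\<^sup>2 * a\<bar> \<le> e * h\<^sup>2 * K" "\<bar>S h - h\<^sup>2 * b\<bar> \<le> e * h\<^sup>2 * K"
    using eventually_happens[of _ "at_right (0::real)"] by auto
  then have "\<bar>h\<^sup>2 * (a - b)\<bar> \<le> h\<^sup>2 * (2 * e * K)"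
    by (simp add: abs_le_iff algebra_simps)
  then have "\<bar>a - b\<bar> \<le> 2 * e * K"
    using \<open>0 < h\<close> by (simp add: abs_mult)
  also have "\<dots> < \<bar>a - b\<bar>"
    using \<open>0 < \<bar>a - b\<bar>\<close> \<open>0 \<le> K\<close> by (simp add: e_def field_simps add_pos_nonneg)
  finally show False by simp
qed

lemma outer_mult_vector: "outer u v *v w = (v \<bullet> w) *\<^sub>R u"
  by (simp add: outer_def matrix_vector_mult_def inner_vec_def vec_eq_iff sum_distrib_left ac_simps)

lemma precond_update_quadratic_form:
  assumes "y \<bullet> s \<noteq> 0"
  shows "g \<bullet> (precond_update s y *v g) = ((norm g)\<^sup>2 + (norm (g - (2 * (s \<bullet> g) / (y \<bullet> s)) *\<^sub>R y))\<^sup>2) / 2"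
proof -
  have form: "g \<bullet> (precond_update s y *v g)
      = g \<bullet> g - 2 * (s \<bullet> g) * (y \<bullet> g) / (y \<bullet> s) + 2 * (y \<bullet> y) * (s \<bullet> g)\<^sup>2 / (y \<bullet> s)\<^sup>2"
    by (simp add: precond_update_def matrix_vector_mult_add_rdistrib matrix_vector_mult_diff_rdistrib
        scaleR_matrix_vector_assoc[symmetric] outer_mult_vector inner_diff_right inner_add_right
        inner_commute power2_eq_square algebra_simps)
  have square: "(norm (g - c *\<^sub>R y))\<^sup>2 = g \<bullet> g - 2 * c * (y \<bullet> g) + c\<^sup>2 * (y \<bullet> y)" for c
    unfolding power2_norm_eq_inner
    by (simp add: inner_diff_left inner_diff_right inner_commute algebra_simps power2_eq_square)
  show ?thesis
    unfolding form square power2_norm_eq_inner[of g] using assms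
    by (simp add: field_simps power2_eq_square)
qed

lemma precond_update_quadratic_form_ge:
  assumes "y \<bullet> s \<noteq> 0"
  shows "(norm g)\<^sup>2 / 2 \<le> g \<bullet> (precond_update s y *v g)"
  using precond_update_quadratic_form[OF assms, of g] by simp

lemma positive_definite_invertible:
  fixes A :: "real^'n^'n"
  assumes "\<And>z. z \<noteq> 0 \<Longrightarrow> 0 < z \<bullet> (A *v z)"
  shows "invertible A"
  unfolding invertible_left_inverse matrix_left_invertible_ker
  using assms by fastforce

lemma matrix_inv_right:
  assumes "invertible A"
  shows "A ** matrix_inv A = mat 1"
  using someI_ex[OF assms[unfolded invertible_def]] by (simp add: matrix_inv_def)

lemma quadratic_form_matrix_inv_ge:
  fixes A :: "real^'n^'n"
  assumes sym: "\<And>u v. u \<bullet> (A *v v) = v \<bullet> (A *v u)"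
    and lower: "\<And>z. m * (norm z)\<^sup>2 \<le> z \<bullet> (A *v z)" and upper: "\<And>z. z \<bullet> (A *v z) \<le> M * (norm z)\<^sup>2"
    and "0 < m"
  shows "(norm g)\<^sup>2 / M \<le> g \<bullet> (matrix_inv A *v g)"
proof (cases "g = 0")
  case False
  define w where "w = matrix_inv A *v g"
  define N where "N = g \<bullet> g"
  define Q where "Q = g \<bullet> (A *v g)"
  have "invertible A"
    using lower \<open>0 < m\<close> by (intro positive_definite_invertible) (meson less_le_trans mult_pos_pos zero_less_norm_iff zero_less_power)
  then have "A *v w = g"
    by (simp add: w_def matrix_vector_mul_assoc matrix_inv_right)
  have "0 < N" using False by (simp add: N_def)
  have "m * N \<le> Q" "Q \<le> M * N"
    using lower[of g] upper[of g] by (simp_all add: N_def Q_def power2_norm_eq_inner)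
  then have "0 < Q"
    using \<open>0 < m\<close> \<open>0 < N\<close> by (meson less_le_trans mult_pos_pos)
  then have "0 < M"
    using \<open>Q \<le> M * N\<close> \<open>0 < N\<close> by (meson less_le_trans zero_less_mult_pos2)
  define t where "t = - N / Q"
  txt \<open>Cauchy-Schwarz for the inner product defined by \<open>A\<close>: the form is nonnegative at
    \<open>w + t g\<close> for the minimizing \<open>t\<close>.\<close>
  have "0 \<le> (w + t *\<^sub>R g) \<bullet> (A *v (w + t *\<^sub>R g))"
    using \<open>0 < m\<close> by (intro order_trans[OF _ lower]) simp
  also have "\<dots> = w \<bullet> g + 2 * t * N + t\<^sup>2 * Q"
    using sym[of w g] \<open>A *v w = g\<close>
    by (simp add: matrix_vector_right_distrib matrix_vector_mult_scaleR inner_add_left inner_add_right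
        N_def Q_def inner_commute power2_eq_square algebra_simps)
  also have "\<dots> = w \<bullet> g - N\<^sup>2 / Q"
    using \<open>0 < Q\<close> by (simp add: t_def field_simps power2_eq_square)
  finally have "N\<^sup>2 / Q \<le> w \<bullet> g" by simp
  moreover have "N / M \<le> N\<^sup>2 / Q"
    using \<open>0 < Q\<close> \<open>Q \<le> M * N\<close> \<open>0 < N\<close> \<open>0 < M\<close> by (simp add: field_simps power2_eq_square)
  ultimately show ?thesis
    by (simp add: N_def w_def inner_commute power2_norm_eq_inner)
qed simp

lemma local_model_decrease:
  assumes "0 < dt"
  shows "local_model dt g 0 - local_model dt g (- (dt / (1 + dt)) *\<^sub>R (H *v g))
    = dt * (2 + dt) / (2 * (1 + dt)\<^sup>2) * (g \<bullet> (H *v g))"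
  using assms by (simp add: local_model_def field_simps power2_eq_square)

lemma local_model_decrease_ge:
  assumes "0 < dt" and "0 \<le> c" and "c * (norm g)\<^sup>2 \<le> g \<bullet> (H *v g)"
  shows "c * dt / (2 * (1 + dt)) * (norm g)\<^sup>2
    \<le> local_model dt g 0 - local_model dt g (- (dt / (1 + dt)) *\<^sub>R (H *v g))"
proof -
  have "0 \<le> c * dt / (2 * (1 + dt)) * (norm g)\<^sup>2"
    using assms(1,2) by simp
  then have "c * dt / (2 * (1 + dt)) * (norm g)\<^sup>2 \<le> c * dt / (2 * (1 + dt)) * (norm g)\<^sup>2 * ((2 + dt) / (1 + dt))"
    using assms(1) by (intro mult_le_cancel_left1[THEN iffD2]) auto
  also have "\<dots> = dt * (2 + dt) / (2 * (1 + dt)\<^sup>2) * (c * (norm g)\<^sup>2)"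
    using assms(1) by (simp add: field_simps power2_eq_square)
  also have "\<dots> \<le> dt * (2 + dt) / (2 * (1 + dt)\<^sup>2) * (g \<bullet> (H *v g))"
    using assms by (intro mult_left_mono) auto
  also have "\<dots> = local_model dt g 0 - local_model dt g (- (dt / (1 + dt)) *\<^sub>R (H *v g))"
    by (rule local_model_decrease[OF assms(1), symmetric])
  finally show ?thesis .
qed

lemma switching_preconditioner_quadratic_form_ge:
  fixes A H :: "real^'n^'n"
  assumes sym: "\<And>u v. u \<bullet> (A *v v) = v \<bullet> (A *v u)"
    and lower: "\<And>z. m * (norm z)\<^sup>2 \<le> z \<bullet> (A *v z)" and upper: "\<And>z. z \<bullet> (A *v z) \<le> M * (norm z)\<^sup>2"
    and "0 < m" and "0 \<le> \<theta>"
    and H: "(\<exists>s y. \<bar>s \<bullet> y\<bar> > \<theta> * (norm s)\<^sup>2 \<and> H = precond_update s y) \<or> H = matrix_inv A"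
  shows "min (1 / 2) (1 / M) * (norm g)\<^sup>2 \<le> g \<bullet> (H *v g)"
  using H
proof
  assume "\<exists>s y. \<bar>s \<bullet> y\<bar> > \<theta> * (norm s)\<^sup>2 \<and> H = precond_update s y"
  then obtain s y where "\<theta> * (norm s)\<^sup>2 < \<bar>s \<bullet> y\<bar>" and H: "H = precond_update s y" by blast
  moreover have "0 \<le> \<theta> * (norm s)\<^sup>2"
    using \<open>0 \<le> \<theta>\<close> by simp
  ultimately have "y \<bullet> s \<noteq> 0"
    by (auto simp: inner_commute)
  have "min (1 / 2) (1 / M) * (norm g)\<^sup>2 \<le> (norm g)\<^sup>2 / 2"
    using mult_right_mono[OF min.cobounded1[of "1 / 2" "1 / M"] zero_le_power2[of "norm g"]] by simp
  also have "\<dots> \<le> g \<bullet> (H *v g)"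
    unfolding H by (rule precond_update_quadratic_form_ge[OF \<open>y \<bullet> s \<noteq> 0\<close>])
  finally show ?thesis .
next
  assume "H = matrix_inv A"
  have "min (1 / 2) (1 / M) * (norm g)\<^sup>2 \<le> (norm g)\<^sup>2 / M"
    using mult_right_mono[OF min.cobounded2[of "1 / 2" "1 / M"] zero_le_power2[of "norm g"]] by simp
  also have "\<dots> \<le> g \<bullet> (H *v g)"
    unfolding \<open>H = matrix_inv A\<close> using sym lower upper \<open>0 < m\<close> by (rule quadratic_form_matrix_inv_ge)
  finally show ?thesis .
qed

theorem lemma2:
  fixes f :: "real^'n \<Rightarrow> real" and grad :: "real^'n \<Rightarrow> real^'n"
    and Hess :: "real^'n \<Rightarrow> real^'n^'n" and x0 :: "real^'n"
    and m M \<theta> :: real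
  assumes f_grad: "\<forall>x. (f has_derivative (\<lambda>h. grad x \<bullet> h)) (at x)"
    and grad_Hess: "\<forall>x. (grad has_derivative (\<lambda>h. Hess x *v h)) (at x)"
    and m_pos: "0 < m" and mM: "m \<le> M" and theta_pos: "0 < \<theta>"
    and Hess_bounds: "\<forall>x \<in> {x. f x \<le> f x0}. \<forall>z.
        m * (norm z)^2 \<le> z \<bullet> (Hess x *v z) \<and> z \<bullet> (Hess x *v z) \<le> M * (norm z)^2"
  shows "\<exists>cm > 0. \<forall>xk dt H. xk \<in> {x. f x \<le> f x0} \<longrightarrow> 0 < dt \<longrightarrow>
      ((\<exists>s y. \<bar>s \<bullet> y\<bar> > \<theta> * (norm s)^2 \<and> H = precond_update s y)
        \<or> H = matrix_inv (Hess xk)) \<longrightarrow>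
      local_model dt (grad xk) 0
        - local_model dt (grad xk) (- (dt / (1 + dt)) *\<^sub>R (H *v grad xk))
      \<ge> cm * dt / (2 * (1 + dt)) * (norm (grad xk))^2"
proof (intro exI[of _ "min (1 / 2) (1 / M)"] conjI allI impI)
  show "0 < min (1 / 2) (1 / M)"
    using m_pos mM by simp
  then have "0 \<le> min (1 / 2) (1 / M)" by simp
  have Hess_symmetric: "u \<bullet> (Hess x *v v) = v \<bullet> (Hess x *v u)" for x u v
    using gradient_derivative_symmetric[OF f_grad[rule_format] grad_Hess[rule_format], of x u v]
    by (simp add: inner_commute)
  fix xk :: "real^'n" and dt :: real and H :: "real^'n^'n"
  assume "xk \<in> {x. f x \<le> f x0}" and "0 < dt"
    and "(\<exists>s y. \<bar>s \<bullet> y\<bar> > \<theta> * (norm s)^2 \<and> H = precond_update s y) \<or> H = matrix_inv (Hess xk)"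
  then have "min (1 / 2) (1 / M) * (norm (grad xk))\<^sup>2 \<le> grad xk \<bullet> (H *v grad xk)"
    using Hess_symmetric Hess_bounds m_pos theta_pos
    by (intro switching_preconditioner_quadratic_form_ge[where m = m and \<theta> = \<theta>]) auto
  with \<open>0 < dt\<close> \<open>0 \<le> min (1 / 2) (1 / M)\<close>
  show "local_model dt (grad xk) 0 - local_model dt (grad xk) (- (dt / (1 + dt)) *\<^sub>R (H *v grad xk))
      \<ge> min (1 / 2) (1 / M) * dt / (2 * (1 + dt)) * (norm (grad xk))\<^sup>2"
    by (intro local_model_decrease_ge) simp_all
qed

end
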